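(* Let $R$ be an associative unital division ring over a field $F$ of characteristic $0$ with a derivation $'$ (vanishing on $F$), let $\lambda\in F$, and let $\theta_n\in R$ be invertible for all $n\in\mathbb{Z}$. Define $$\mathcal{L}_n=\begin{pmatrix}\lambda-\theta_n'\theta_n^{-1} & -\theta_n\\ \theta_n^{-1} & 0\end{pmatrix},\qquad \mathcal{M}_n=\begin{pmatrix}0 & -\theta_n\\ \theta_{n-1}^{-1} & -\lambda\end{pmatrix}.$$ If $(\theta_n'\theta_n^{-1})'=\theta_{n+1}\theta_n^{-1}-\theta_n\theta_{n-1}^{-1}$ for all $n$, then $\mathcal{L}_n'=\mathcal{M}_{n+1}\mathcal{L}_n-\mathcal{L}_n\mathcal{M}_n$ for all $n$, where $'$ acts entrywise. *)

theory Defs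
  imports "HOL-Analysis.Analysis"
begin

definition mat2 :: "'a::zero \<Rightarrow> 'a \<Rightarrow> 'a \<Rightarrow> 'a \<Rightarrow> 'a^2^2" where
  "mat2 a b c d = vector [vector [a, b], vector [c, d]]"

definition mat_deriv :: "('a \<Rightarrow> 'a) \<Rightarrow> 'a^2^2 \<Rightarrow> 'a^2^2" where
  "mat_deriv D A = (\<chi> i j. D (A $ i $ j))"

text \<open>F is a subfield of the division ring R lying in its centre (R is an F-algebra).\<close>
definition central_subfield :: "'a::division_ring set \<Rightarrow> bool" where
  "central_subfield F \<longleftrightarrow> 0 \<in> F \<and> 1 \<in> F \<and>
     (\<forall>x\<in>F. \<forall>y\<in>F. x + y \<in> F \<and> x - y \<in> F \<and> x * y \<in> F) \<and>
     (\<forall>x\<in>F. inverse x \<in> F) \<and>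
     (\<forall>x\<in>F. \<forall>y. x * y = y * x)"

definition is_derivation_over :: "'a::ring set \<Rightarrow> ('a \<Rightarrow> 'a) \<Rightarrow> bool" where
  "is_derivation_over F D \<longleftrightarrow>
     (\<forall>x y. D (x + y) = D x + D y) \<and>
     (\<forall>x y. D (x * y) = D x * y + x * D y) \<and>
     (\<forall>c\<in>F. D c = 0)"

end

theory Submission
  imports Defs
begin

text \<open>Besides the hypothesis on \<open>\<theta>\<close>, which is
  exactly the (1,1) entry, one only needs the formula
  \<open>(\<theta>\<^sup>-\<^sup>1)' = - \<theta>\<^sup>-\<^sup>1 \<theta>' \<theta>\<^sup>-\<^sup>1\<close> for the derivative of an inverse and the fact that
  \<open>\<lambda>\<close> is a central constant.\<close>

lemma mat2_mult:
  "mat2 a b c d ** mat2 e f g h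
     = mat2 (a * e + b * g) (a * f + b * h) (c * e + d * g) (c * f + d * h)"
  by (simp add: matrix_matrix_mult_def mat2_def sum_2 vec_eq_iff forall_2)

lemma mat2_diff: "mat2 a b c d - mat2 e f g h = mat2 (a - e) (b - f) (c - g) (d - h)"
  by (simp add: mat2_def vec_eq_iff forall_2)

lemma mat_deriv_mat2: "mat_deriv D (mat2 a b c d) = mat2 (D a) (D b) (D c) (D d)"
  by (simp add: mat_deriv_def mat2_def vec_eq_iff forall_2)

lemma mat2_eq_iff: "mat2 a b c d = mat2 e f g h \<longleftrightarrow> a = e \<and> b = f \<and> c = g \<and> d = h"
  by (simp add: mat2_def vec_eq_iff forall_2)

context
  fixes F :: "'a::ring_1 set" and D :: "'a \<Rightarrow> 'a"
  assumes D: "is_derivation_over F D"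
begin

lemma derivation_add: "D (x + y) = D x + D y"
  using D by (simp add: is_derivation_over_def)

lemma derivation_mult: "D (x * y) = D x * y + x * D y"
  using D by (simp add: is_derivation_over_def)

lemma derivation_const: "c \<in> F \<Longrightarrow> D c = 0"
  using D by (simp add: is_derivation_over_def)

lemma derivation_zero: "D 0 = 0"
  using derivation_add [of 0 0] by simp

lemma derivation_one: "D 1 = 0"
  using derivation_mult [of 1 1] by simp

lemma derivation_uminus: "D (- x) = - D x"
  using derivation_add [of x "- x"] by (simp add: derivation_zero minus_unique)

lemma derivation_diff: "D (x - y) = D x - D y"
  by (simp only: diff_conv_add_uminus derivation_add derivation_uminus)

end

lemma derivation_inverse:
  fixes D :: "'a::division_ring \<Rightarrow> 'a"
  assumes D: "is_derivation_over F D" and "x \<noteq> 0"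
  shows "D (inverse x) = - (inverse x * D x * inverse x)"
proof -
  let ?u = "inverse x"
  have "0 = ?u * D (x * ?u)"
    using \<open>x \<noteq> 0\<close> by (simp add: derivation_one [OF D])
  also have "\<dots> = ?u * D x * ?u + (?u * x) * D ?u"
    by (simp add: derivation_mult [OF D] distrib_left mult.assoc)
  also have "\<dots> = ?u * D x * ?u + D ?u"
    using \<open>x \<noteq> 0\<close> by simp
  finally show ?thesis
    by (metis add.commute eq_neg_iff_add_eq_0)
qed

theorem proposition4p8:
  fixes F :: "'r::division_ring set" and D :: "'r \<Rightarrow> 'r"
    and lam :: 'r and \<theta> :: "int \<Rightarrow> 'r"
  assumes F: "central_subfield F"
    and char0: "CHAR('r) = 0"
    and D: "is_derivation_over F D"
    and lam: "lam \<in> F"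
    and inv: "\<And>n. \<theta> n \<noteq> 0"
    and hyp: "\<And>n. D (D (\<theta> n) * inverse (\<theta> n))
                 = \<theta> (n + 1) * inverse (\<theta> n) - \<theta> n * inverse (\<theta> (n - 1))"
  shows "\<forall>n::int.
     mat_deriv D (mat2 (lam - D (\<theta> n) * inverse (\<theta> n)) (- \<theta> n) (inverse (\<theta> n)) 0)
     = mat2 0 (- \<theta> (n + 1)) (inverse (\<theta> n)) (- lam)
         ** mat2 (lam - D (\<theta> n) * inverse (\<theta> n)) (- \<theta> n) (inverse (\<theta> n)) 0
       - mat2 (lam - D (\<theta> n) * inverse (\<theta> n)) (- \<theta> n) (inverse (\<theta> n)) 0
         ** mat2 0 (- \<theta> n) (inverse (\<theta> (n - 1))) (- lam)"
proof -
  have lam_central: "lam * y = y * lam" for y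
    using F lam by (auto simp: central_subfield_def)
  have "D (\<theta> n) * inverse (\<theta> n) * \<theta> n = D (\<theta> n)" for n
    using inv [of n] by (simp add: mult.assoc)
  then show ?thesis
    unfolding mat_deriv_mat2 mat2_mult mat2_diff mat2_eq_iff
    by (simp add: hyp derivation_inverse [OF D inv] derivation_const [OF D lam]
        derivation_diff [OF D] derivation_uminus [OF D] derivation_zero [OF D]
        lam_central algebra_simps)
qed

end
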